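(* Let $\mathcal{X}$ be finite, $\mathcal{C}\subseteq\{\pm1\}^{\mathcal{X}}$ a concept class with concept matrix $W\in\mathbb{R}^{\mathcal{C}\times\mathcal{X}}$ and difference matrix $D\in\mathbb{R}^{\mathcal{C}^2\times\mathcal{X}}$, and let $\alpha\ge0$. Then $\gamma_2(D,\alpha)\le\gamma_2(W,\alpha)$. Conversely, $\gamma_2(W,\alpha)\le 2\gamma_2(D,\alpha/2)+1$, and if $\mathcal{C}$ is closed under negation (i.e. $c\in\mathcal{C}\Rightarrow -c\in\mathcal{C}$) then $\gamma_2(W,\alpha)\le\gamma_2(D,\alpha)$.
   Context: The concept matrix $W$ has entries $w_{c,x}=c(x)$. The difference matrix $D$ has rows indexed by ordered pairs $(c,c')\in\mathcal{C}^2$ and entries $d_{(c,c'),x}=\frac12(c(x)-c'(x))\in\{-1,0,1\}$. $\gamma_2(M)=\min\{\|R\|_{2\to\infty}\|A\|_{1\to2}:RA=M\}$, where $\|\cdot\|_{2\to\infty}$ is the maximum Euclidean row norm and $\|\cdot\|_{1\to2}$ the maximum Euclidean column norm; $\gamma_2(M,\alpha)=\min\{\gamma_2(\widetilde M):\max_{i,j}|\widetilde m_{ij}-m_{ij}|\le\alpha\}$. *)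

theory Defs
  imports Complex_Main
begin

text \<open>Matrices are functions row-index \<Rightarrow> column-index \<Rightarrow> real, considered on finite
  index sets Rs (rows) and Cs (columns).\<close>

definition row_norm_2inf :: "'r set \<Rightarrow> nat \<Rightarrow> ('r \<Rightarrow> nat \<Rightarrow> real) \<Rightarrow> real" where
  "row_norm_2inf Rs k R = Max (insert 0 ((\<lambda>i. sqrt (\<Sum>l<k. (R i l)^2)) ` Rs))"

definition col_norm_12 :: "'c set \<Rightarrow> nat \<Rightarrow> (nat \<Rightarrow> 'c \<Rightarrow> real) \<Rightarrow> real" where
  "col_norm_12 Cs k A = Max (insert 0 ((\<lambda>j. sqrt (\<Sum>l<k. (A l j)^2)) ` Cs))"

definition gamma2 :: "'r set \<Rightarrow> 'c set \<Rightarrow> ('r \<Rightarrow> 'c \<Rightarrow> real) \<Rightarrow> real" where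
  "gamma2 Rs Cs M = Inf {row_norm_2inf Rs k R * col_norm_12 Cs k A | k R A.
      \<forall>i\<in>Rs. \<forall>j\<in>Cs. (\<Sum>l<k. R i l * A l j) = M i j}"

definition gamma2_approx :: "'r set \<Rightarrow> 'c set \<Rightarrow> ('r \<Rightarrow> 'c \<Rightarrow> real) \<Rightarrow> real \<Rightarrow> real" where
  "gamma2_approx Rs Cs M \<alpha> = Inf {gamma2 Rs Cs M' | M'.
      \<forall>i\<in>Rs. \<forall>j\<in>Cs. \<bar>M' i j - M i j\<bar> \<le> \<alpha>}"

definition concept_matrix :: "('x \<Rightarrow> real) \<Rightarrow> 'x \<Rightarrow> real" where
  "concept_matrix c x = c x"

definition diff_matrix :: "('x \<Rightarrow> real) \<times> ('x \<Rightarrow> real) \<Rightarrow> 'x \<Rightarrow> real" where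
  "diff_matrix p x = (fst p x - snd p x) / 2"

end

theory Submission
  imports Defs
begin

text \<open>\<open>\<gamma>\<^sub>2\<close> behaves like a norm: it is subadditive and absolutely homogeneous, it does not grow
  when rows are selected or repeated, and it is at most 1 on a rank-one matrix with entries in
  \<open>[-1, 1]\<close>. Subadditivity comes from concatenating two factorisations after rescaling each one
  so that its row and column norms agree. Every row of \<open>D\<close> is half the difference of two rows
  of \<open>W\<close>; conversely row \<open>c\<close> of \<open>W\<close> is \<open>2 D(c, c\<^sub>0) + c\<^sub>0\<close> for any fixed \<open>c\<^sub>0 \<in> C\<close>, and it is
  row \<open>(c, -c)\<close> of \<open>D\<close> when \<open>C\<close> is closed under negation. These identities are affine in the
  matrix, so they carry entrywise \<open>\<alpha>\<close>-approximations of one matrix to approximations of the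
  other, with \<open>\<alpha>\<close> halved in the second case.\<close>

definition factorises ::
    "'r set \<Rightarrow> 'c set \<Rightarrow> ('r \<Rightarrow> 'c \<Rightarrow> real) \<Rightarrow> nat \<Rightarrow> ('r \<Rightarrow> nat \<Rightarrow> real) \<Rightarrow> (nat \<Rightarrow> 'c \<Rightarrow> real) \<Rightarrow> bool"
  where "factorises Rs Cs M k R A \<longleftrightarrow> (\<forall>i\<in>Rs. \<forall>j\<in>Cs. (\<Sum>l<k. R i l * A l j) = M i j)"

lemma row_norm_2inf_le_iff:
  assumes "finite Rs"
  shows "row_norm_2inf Rs k R \<le> B \<longleftrightarrow> 0 \<le> B \<and> (\<forall>i\<in>Rs. (\<Sum>l<k. (R i l)^2) \<le> B^2)"
  using assms by (auto simp: row_norm_2inf_def real_le_lsqrt sum_nonneg dest: sqrt_le_D)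

lemma col_norm_12_le_iff:
  assumes "finite Cs"
  shows "col_norm_12 Cs k A \<le> B \<longleftrightarrow> 0 \<le> B \<and> (\<forall>j\<in>Cs. (\<Sum>l<k. (A l j)^2) \<le> B^2)"
  using assms by (auto simp: col_norm_12_def real_le_lsqrt sum_nonneg dest: sqrt_le_D)

lemma row_norm_2inf_nonneg: "finite Rs \<Longrightarrow> 0 \<le> row_norm_2inf Rs k R"
  using row_norm_2inf_le_iff by blast

lemma col_norm_12_nonneg: "finite Cs \<Longrightarrow> 0 \<le> col_norm_12 Cs k A"
  using col_norm_12_le_iff by blast

lemma row_norm_2inf_upper:
  "finite Rs \<Longrightarrow> i \<in> Rs \<Longrightarrow> (\<Sum>l<k. (R i l)^2) \<le> (row_norm_2inf Rs k R)^2"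
  using row_norm_2inf_le_iff by blast

lemma col_norm_12_upper:
  "finite Cs \<Longrightarrow> j \<in> Cs \<Longrightarrow> (\<Sum>l<k. (A l j)^2) \<le> (col_norm_12 Cs k A)^2"
  using col_norm_12_le_iff by blast

lemma row_norm_2inf_scale_le:
  assumes "finite Rs"
  shows "row_norm_2inf Rs k (\<lambda>i l. s * R i l) \<le> \<bar>s\<bar> * row_norm_2inf Rs k R"
proof -
  have "(\<Sum>l<k. (s * R i l)^2) \<le> (\<bar>s\<bar> * row_norm_2inf Rs k R)^2" if "i \<in> Rs" for i
    using row_norm_2inf_upper[OF assms that, where k=k and R=R]
    by (simp add: power_mult_distrib sum_distrib_left[symmetric] mult_left_mono)
  then show ?thesis
    using assms by (simp add: row_norm_2inf_le_iff row_norm_2inf_nonneg)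
qed

lemma col_norm_12_scale_le:
  assumes "finite Cs"
  shows "col_norm_12 Cs k (\<lambda>l j. s * A l j) \<le> \<bar>s\<bar> * col_norm_12 Cs k A"
proof -
  have "(\<Sum>l<k. (s * A l j)^2) \<le> (\<bar>s\<bar> * col_norm_12 Cs k A)^2" if "j \<in> Cs" for j
    using col_norm_12_upper[OF assms that, where k=k and A=A]
    by (simp add: power_mult_distrib sum_distrib_left[symmetric] mult_left_mono)
  then show ?thesis
    using assms by (simp add: col_norm_12_le_iff col_norm_12_nonneg)
qed

lemma factorises_exists:
  assumes "finite Cs"
  shows "\<exists>k R A. factorises Rs Cs M k R A"
proof -
  obtain h where h: "bij_betw h {..<card Cs} Cs"
    using assms ex_bij_betw_nat_finite lessThan_atLeast0 by metis
  have "(\<Sum>l<card Cs. M i (h l) * (if h l = j then 1 else 0)) = M i j" if "j \<in> Cs" for i j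
    using sum.reindex_bij_betw[OF h, of "\<lambda>y. M i y * (if y = j then 1 else 0)"] assms that
    by (simp add: if_distrib cong: if_cong)
  then have "factorises Rs Cs M (card Cs) (\<lambda>i l. M i (h l)) (\<lambda>l j. if h l = j then 1 else 0)"
    unfolding factorises_def by blast
  then show ?thesis by blast
qed

lemma gamma2_le_factorisation:
  assumes "finite Rs" "finite Cs" "factorises Rs Cs M k R A"
  shows "gamma2 Rs Cs M \<le> row_norm_2inf Rs k R * col_norm_12 Cs k A"
  unfolding gamma2_def
proof (rule cInf_lower)
  show "row_norm_2inf Rs k R * col_norm_12 Cs k A \<in> {row_norm_2inf Rs k R * col_norm_12 Cs k A | k R A.
      \<forall>i\<in>Rs. \<forall>j\<in>Cs. (\<Sum>l<k. R i l * A l j) = M i j}"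
    using assms(3) unfolding factorises_def by blast
  show "bdd_below {row_norm_2inf Rs k R * col_norm_12 Cs k A | k R A.
      \<forall>i\<in>Rs. \<forall>j\<in>Cs. (\<Sum>l<k. R i l * A l j) = M i j}"
    using assms(1,2) by (auto intro!: bdd_belowI[where m=0] mult_nonneg_nonneg row_norm_2inf_nonneg col_norm_12_nonneg)
qed

lemma gamma2_greatest:
  assumes "finite Cs"
    and "\<And>k R A. factorises Rs Cs M k R A \<Longrightarrow> b \<le> row_norm_2inf Rs k R * col_norm_12 Cs k A"
  shows "b \<le> gamma2 Rs Cs M"
  unfolding gamma2_def
  using factorises_exists[OF assms(1), of Rs M] assms(2)
  by (intro cInf_greatest) (auto simp: factorises_def)

lemma gamma2_nonneg: "finite Rs \<Longrightarrow> finite Cs \<Longrightarrow> 0 \<le> gamma2 Rs Cs M"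
  by (rule gamma2_greatest) (auto intro!: mult_nonneg_nonneg row_norm_2inf_nonneg col_norm_12_nonneg)

lemma gamma2_le_scaled_by_factorisations:
  assumes fin: "finite Rs" "finite Cs" "finite Rs'" "finite Cs'" and "0 \<le> s"
    and transfer: "\<And>k R A. factorises Rs Cs M k R A \<Longrightarrow> \<exists>k' R' A'. factorises Rs' Cs' N k' R' A' \<and>
        row_norm_2inf Rs' k' R' * col_norm_12 Cs' k' A' \<le> s * (row_norm_2inf Rs k R * col_norm_12 Cs k A)"
  shows "gamma2 Rs' Cs' N \<le> s * gamma2 Rs Cs M"
proof -
  have N_le: "gamma2 Rs' Cs' N \<le> s * (row_norm_2inf Rs k R * col_norm_12 Cs k A)"
    if "factorises Rs Cs M k R A" for k R A
    using transfer[OF that] gamma2_le_factorisation[OF fin(3,4)] by (meson order_trans)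
  show ?thesis
  proof (cases "s = 0")
    case True
    obtain k R A where "factorises Rs Cs M k R A"
      using factorises_exists[OF fin(2)] by blast
    with N_le True show ?thesis by simp
  next
    case False
    with \<open>0 \<le> s\<close> have s: "0 < s" by simp
    have "gamma2 Rs' Cs' N / s \<le> gamma2 Rs Cs M"
      by (intro gamma2_greatest[OF fin(2)]) (metis N_le s pos_divide_le_eq mult.commute)
    with s show ?thesis
      by (metis pos_divide_le_eq mult.commute)
  qed
qed

lemma gamma2_reindex_rows_le:
  assumes "finite Rs" "finite Rs'" "finite Cs" "f ` Rs' \<subseteq> Rs"
  shows "gamma2 Rs' Cs (\<lambda>i. M (f i)) \<le> gamma2 Rs Cs M"
proof -
  have "\<exists>k' R' A'. factorises Rs' Cs (\<lambda>i. M (f i)) k' R' A' \<and>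
      row_norm_2inf Rs' k' R' * col_norm_12 Cs k' A' \<le> 1 * (row_norm_2inf Rs k R * col_norm_12 Cs k A)"
    if "factorises Rs Cs M k R A" for k R A
  proof (intro exI conjI)
    show "factorises Rs' Cs (\<lambda>i. M (f i)) k (\<lambda>i. R (f i)) A"
      using that assms(4) by (auto simp: factorises_def)
    have "row_norm_2inf Rs' k (\<lambda>i. R (f i)) \<le> row_norm_2inf Rs k R"
      using assms by (auto simp: row_norm_2inf_le_iff row_norm_2inf_nonneg row_norm_2inf_upper)
    then show "row_norm_2inf Rs' k (\<lambda>i. R (f i)) * col_norm_12 Cs k A
        \<le> 1 * (row_norm_2inf Rs k R * col_norm_12 Cs k A)"
      using assms(3) by (simp add: mult_right_mono col_norm_12_nonneg)
  qed
  then show ?thesis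
    using gamma2_le_scaled_by_factorisations[of Rs Cs Rs' Cs 1 M "\<lambda>i. M (f i)"] assms by simp
qed

lemma gamma2_scale_le:
  assumes "finite Rs" "finite Cs"
  shows "gamma2 Rs Cs (\<lambda>i j. s * M i j) \<le> \<bar>s\<bar> * gamma2 Rs Cs M"
proof (rule gamma2_le_scaled_by_factorisations[OF assms assms abs_ge_zero])
  fix k R A assume fact: "factorises Rs Cs M k R A"
  show "\<exists>k' R' A'. factorises Rs Cs (\<lambda>i j. s * M i j) k' R' A' \<and>
      row_norm_2inf Rs k' R' * col_norm_12 Cs k' A' \<le> \<bar>s\<bar> * (row_norm_2inf Rs k R * col_norm_12 Cs k A)"
  proof (intro exI conjI)
    show "factorises Rs Cs (\<lambda>i j. s * M i j) k (\<lambda>i l. s * R i l) A"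
      using fact by (auto simp: factorises_def sum_distrib_left[symmetric] mult.assoc)
    show "row_norm_2inf Rs k (\<lambda>i l. s * R i l) * col_norm_12 Cs k A
        \<le> \<bar>s\<bar> * (row_norm_2inf Rs k R * col_norm_12 Cs k A)"
      using mult_right_mono[OF row_norm_2inf_scale_le[OF assms(1)] col_norm_12_nonneg[OF assms(2)]]
      by (simp add: mult.assoc)
  qed
qed

lemma factorises_balanced:
  assumes fin: "finite Rs" "finite Cs" and fact: "factorises Rs Cs M k R A"
  defines "p \<equiv> row_norm_2inf Rs k R * col_norm_12 Cs k A"
  shows "\<exists>k' R' A'. factorises Rs Cs M k' R' A' \<and>
    row_norm_2inf Rs k' R' \<le> sqrt p \<and> col_norm_12 Cs k' A' \<le> sqrt p"
proof -
  define r where "r = row_norm_2inf Rs k R"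
  define a where "a = col_norm_12 Cs k A"
  have r: "0 \<le> r" and a: "0 \<le> a"
    using fin by (simp_all add: r_def a_def row_norm_2inf_nonneg col_norm_12_nonneg)
  have p: "p = r * a" by (simp add: p_def r_def a_def)
  show ?thesis
  proof (cases "r = 0 \<or> a = 0")
    case True
    \<comment> \<open>then \<open>M\<close> vanishes on \<open>Rs \<times> Cs\<close> and the empty factorisation does the job\<close>
    have "(\<Sum>l<k. R i l * A l j) = 0" if "i \<in> Rs" "j \<in> Cs" for i j
    proof -
      have "(\<Sum>l<k. (R i l)^2) = 0 \<or> (\<Sum>l<k. (A l j)^2) = 0"
        using True row_norm_2inf_upper[OF fin(1) that(1), where k=k and R=R]
          col_norm_12_upper[OF fin(2) that(2), where k=k and A=A]
        by (auto simp: r_def a_def intro!: antisym sum_nonneg)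
      then show ?thesis
        by (auto simp: sum_nonneg_eq_0_iff intro!: sum.neutral)
    qed
    then have "factorises Rs Cs M 0 R A"
      using fact by (simp add: factorises_def)
    moreover have "row_norm_2inf Rs 0 R \<le> sqrt p" "col_norm_12 Cs 0 A \<le> sqrt p"
      using fin r a by (simp_all add: p row_norm_2inf_le_iff col_norm_12_le_iff)
    ultimately show ?thesis by blast
  next
    case False
    with r a have r: "0 < r" and a: "0 < a" by simp_all
    define t where "t = sqrt (a / r)"
    have t: "0 < t" using r a by (simp add: t_def)
    have "factorises Rs Cs M k (\<lambda>i l. t * R i l) (\<lambda>l j. (1 / t) * A l j)"
      using fact t by (simp add: factorises_def)
    moreover have "t * r = sqrt p" "\<bar>1 / t\<bar> * a = sqrt p"
      using r a by (simp_all add: t_def p real_sqrt_divide real_sqrt_mult field_simps)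
    ultimately show ?thesis
      using row_norm_2inf_scale_le[OF fin(1), where k=k and s=t and R=R]
        col_norm_12_scale_le[OF fin(2), where k=k and s="1 / t" and A=A] t
      by (auto simp: r_def a_def)
  qed
qed

lemma sum_lessThan_add:
  fixes m n :: nat
  shows "(\<Sum>l<m + n. f l) = (\<Sum>l<m. f l) + (\<Sum>l<n. f (m + l))"
  by (induction n) (simp_all add: add.assoc)

lemma factorises_add:
  assumes fin: "finite Rs" "finite Cs"
    and M: "factorises Rs Cs M k\<^sub>1 R\<^sub>1 A\<^sub>1" and N: "factorises Rs Cs N k\<^sub>2 R\<^sub>2 A\<^sub>2"
  shows "\<exists>k R A. factorises Rs Cs (\<lambda>i j. M i j + N i j) k R A
    \<and> row_norm_2inf Rs k R \<le> sqrt ((row_norm_2inf Rs k\<^sub>1 R\<^sub>1)^2 + (row_norm_2inf Rs k\<^sub>2 R\<^sub>2)^2)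
    \<and> col_norm_12 Cs k A \<le> sqrt ((col_norm_12 Cs k\<^sub>1 A\<^sub>1)^2 + (col_norm_12 Cs k\<^sub>2 A\<^sub>2)^2)"
proof (intro exI conjI)
  define R where "R i l = (if l < k\<^sub>1 then R\<^sub>1 i l else R\<^sub>2 i (l - k\<^sub>1))" for i l
  define A where "A l j = (if l < k\<^sub>1 then A\<^sub>1 l j else A\<^sub>2 (l - k\<^sub>1) j)" for l j
  show "factorises Rs Cs (\<lambda>i j. M i j + N i j) (k\<^sub>1 + k\<^sub>2) R A"
    using M N by (simp add: factorises_def sum_lessThan_add R_def A_def)
  show "row_norm_2inf Rs (k\<^sub>1 + k\<^sub>2) R \<le> sqrt ((row_norm_2inf Rs k\<^sub>1 R\<^sub>1)^2 + (row_norm_2inf Rs k\<^sub>2 R\<^sub>2)^2)"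
    using fin row_norm_2inf_upper[OF fin(1), where k=k\<^sub>1 and R=R\<^sub>1]
      row_norm_2inf_upper[OF fin(1), where k=k\<^sub>2 and R=R\<^sub>2]
    by (auto simp: row_norm_2inf_le_iff sum_lessThan_add R_def intro: add_mono)
  show "col_norm_12 Cs (k\<^sub>1 + k\<^sub>2) A \<le> sqrt ((col_norm_12 Cs k\<^sub>1 A\<^sub>1)^2 + (col_norm_12 Cs k\<^sub>2 A\<^sub>2)^2)"
    using fin col_norm_12_upper[OF fin(2), where k=k\<^sub>1 and A=A\<^sub>1]
      col_norm_12_upper[OF fin(2), where k=k\<^sub>2 and A=A\<^sub>2]
    by (auto simp: col_norm_12_le_iff sum_lessThan_add A_def intro: add_mono)
qed

lemma gamma2_add_le_norm_products:
  assumes fin: "finite Rs" "finite Cs"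
    and M: "factorises Rs Cs M k\<^sub>1 R\<^sub>1 A\<^sub>1" and N: "factorises Rs Cs N k\<^sub>2 R\<^sub>2 A\<^sub>2"
  defines "p \<equiv> row_norm_2inf Rs k\<^sub>1 R\<^sub>1 * col_norm_12 Cs k\<^sub>1 A\<^sub>1"
    and "q \<equiv> row_norm_2inf Rs k\<^sub>2 R\<^sub>2 * col_norm_12 Cs k\<^sub>2 A\<^sub>2"
  shows "gamma2 Rs Cs (\<lambda>i j. M i j + N i j) \<le> p + q"
proof -
  have "0 \<le> p" "0 \<le> q"
    using fin by (simp_all add: p_def q_def row_norm_2inf_nonneg col_norm_12_nonneg)
  have square_le: "x^2 \<le> t" if "0 \<le> x" "x \<le> sqrt t" "0 \<le> t" for x t :: real
    using power_mono[OF that(2,1), of 2] that(3) by simp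
  \<comment> \<open>Balancing first is what turns the sums of squares of the concatenation into \<open>p + q\<close>.\<close>
  obtain k\<^sub>1' R\<^sub>1' A\<^sub>1' where M': "factorises Rs Cs M k\<^sub>1' R\<^sub>1' A\<^sub>1'"
    and "row_norm_2inf Rs k\<^sub>1' R\<^sub>1' \<le> sqrt p" "col_norm_12 Cs k\<^sub>1' A\<^sub>1' \<le> sqrt p"
    using factorises_balanced[OF fin M] by (auto simp: p_def)
  then have p_bounds: "(row_norm_2inf Rs k\<^sub>1' R\<^sub>1')^2 \<le> p" "(col_norm_12 Cs k\<^sub>1' A\<^sub>1')^2 \<le> p"
    using fin \<open>0 \<le> p\<close> by (simp_all add: square_le row_norm_2inf_nonneg col_norm_12_nonneg)
  obtain k\<^sub>2' R\<^sub>2' A\<^sub>2' where N': "factorises Rs Cs N k\<^sub>2' R\<^sub>2' A\<^sub>2'"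
    and "row_norm_2inf Rs k\<^sub>2' R\<^sub>2' \<le> sqrt q" "col_norm_12 Cs k\<^sub>2' A\<^sub>2' \<le> sqrt q"
    using factorises_balanced[OF fin N] by (auto simp: q_def)
  then have q_bounds: "(row_norm_2inf Rs k\<^sub>2' R\<^sub>2')^2 \<le> q" "(col_norm_12 Cs k\<^sub>2' A\<^sub>2')^2 \<le> q"
    using fin \<open>0 \<le> q\<close> by (simp_all add: square_le row_norm_2inf_nonneg col_norm_12_nonneg)
  obtain k R A where MN: "factorises Rs Cs (\<lambda>i j. M i j + N i j) k R A"
    and "row_norm_2inf Rs k R \<le> sqrt (p + q)" "col_norm_12 Cs k A \<le> sqrt (p + q)"
    using factorises_add[OF fin M' N'] p_bounds q_bounds
    by (meson add_mono order_trans real_sqrt_le_iff)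
  then have "row_norm_2inf Rs k R * col_norm_12 Cs k A \<le> sqrt (p + q) * sqrt (p + q)"
    using fin \<open>0 \<le> p\<close> \<open>0 \<le> q\<close>
    by (intro mult_mono) (simp_all add: row_norm_2inf_nonneg col_norm_12_nonneg)
  with gamma2_le_factorisation[OF fin MN] show ?thesis
    using \<open>0 \<le> p\<close> \<open>0 \<le> q\<close> by simp
qed

lemma gamma2_add_le:
  assumes fin: "finite Rs" "finite Cs"
  shows "gamma2 Rs Cs (\<lambda>i j. M i j + N i j) \<le> gamma2 Rs Cs M + gamma2 Rs Cs N"
proof -
  have "gamma2 Rs Cs (\<lambda>i j. M i j + N i j) - gamma2 Rs Cs N \<le> gamma2 Rs Cs M"
  proof (rule gamma2_greatest[OF fin(2)])
    fix k\<^sub>1 R\<^sub>1 A\<^sub>1 assume M: "factorises Rs Cs M k\<^sub>1 R\<^sub>1 A\<^sub>1"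
    have "gamma2 Rs Cs (\<lambda>i j. M i j + N i j) - row_norm_2inf Rs k\<^sub>1 R\<^sub>1 * col_norm_12 Cs k\<^sub>1 A\<^sub>1
        \<le> gamma2 Rs Cs N"
      using gamma2_add_le_norm_products[OF fin M] by (intro gamma2_greatest[OF fin(2)]) force
    then show "gamma2 Rs Cs (\<lambda>i j. M i j + N i j) - gamma2 Rs Cs N
        \<le> row_norm_2inf Rs k\<^sub>1 R\<^sub>1 * col_norm_12 Cs k\<^sub>1 A\<^sub>1"
      by simp
  qed
  then show ?thesis by simp
qed

lemma gamma2_rank_one_le:
  assumes "finite Rs" "finite Cs" "\<forall>i\<in>Rs. \<bar>u i\<bar> \<le> 1" "\<forall>j\<in>Cs. \<bar>v j\<bar> \<le> 1"
  shows "gamma2 Rs Cs (\<lambda>i j. u i * v j) \<le> 1"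
proof -
  have "factorises Rs Cs (\<lambda>i j. u i * v j) 1 (\<lambda>i l. u i) (\<lambda>l j. v j)"
    by (simp add: factorises_def)
  moreover have "row_norm_2inf Rs 1 (\<lambda>i l. u i) \<le> 1" "col_norm_12 Cs 1 (\<lambda>l j. v j) \<le> 1"
    using assms by (simp_all add: row_norm_2inf_le_iff col_norm_12_le_iff abs_square_le_1)
  ultimately show ?thesis
    using gamma2_le_factorisation[OF assms(1,2)] assms(1,2)
    by (meson mult_le_one order_trans row_norm_2inf_nonneg col_norm_12_nonneg)
qed

lemma gamma2_approx_le:
  assumes "finite Rs" "finite Cs" "\<forall>i\<in>Rs. \<forall>j\<in>Cs. \<bar>M' i j - M i j\<bar> \<le> \<alpha>"
  shows "gamma2_approx Rs Cs M \<alpha> \<le> gamma2 Rs Cs M'"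
  unfolding gamma2_approx_def
  using assms by (intro cInf_lower bdd_belowI[where m=0]) (auto intro: gamma2_nonneg)

lemma gamma2_approx_greatest:
  assumes "0 \<le> \<alpha>" "\<And>M'. \<forall>i\<in>Rs. \<forall>j\<in>Cs. \<bar>M' i j - M i j\<bar> \<le> \<alpha> \<Longrightarrow> b \<le> gamma2 Rs Cs M'"
  shows "b \<le> gamma2_approx Rs Cs M \<alpha>"
  unfolding gamma2_approx_def
proof (rule cInf_greatest)
  show "{gamma2 Rs Cs M' |M'. \<forall>i\<in>Rs. \<forall>j\<in>Cs. \<bar>M' i j - M i j\<bar> \<le> \<alpha>} \<noteq> {}"
    using assms(1) by (auto intro!: exI[where x=M])
qed (use assms(2) in blast)

lemma finite_funs_into:
  assumes "finite S"
  shows "finite {f :: 'a::finite \<Rightarrow> 'b. \<forall>x. f x \<in> S}"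
  using finite_set_of_finite_funs[OF finite_UNIV assms] by simp

lemma gamma2_approx_diff_le_concept:
  fixes C :: "('x::finite \<Rightarrow> real) set"
  assumes fin: "finite C" and "0 \<le> \<alpha>"
  shows "gamma2_approx (C \<times> C) UNIV diff_matrix \<alpha> \<le> gamma2_approx C UNIV concept_matrix \<alpha>"
proof (rule gamma2_approx_greatest[OF \<open>0 \<le> \<alpha>\<close>])
  fix W' assume W': "\<forall>c\<in>C. \<forall>x\<in>UNIV. \<bar>W' c x - concept_matrix c x\<bar> \<le> \<alpha>"
  define D' where "D' p x = (1 / 2) * W' (fst p) x + (- 1 / 2) * W' (snd p) x" for p x
  have "\<forall>p\<in>C \<times> C. \<forall>x\<in>UNIV. \<bar>D' p x - diff_matrix p x\<bar> \<le> \<alpha>"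
  proof (intro ballI)
    fix p x assume "p \<in> C \<times> C"
    then have "\<bar>W' (fst p) x - fst p x\<bar> \<le> \<alpha>" "\<bar>W' (snd p) x - snd p x\<bar> \<le> \<alpha>"
      using W' by (auto simp: concept_matrix_def)
    moreover have "D' p x - diff_matrix p x = ((W' (fst p) x - fst p x) - (W' (snd p) x - snd p x)) / 2"
      by (simp add: D'_def diff_matrix_def field_simps)
    ultimately show "\<bar>D' p x - diff_matrix p x\<bar> \<le> \<alpha>"
      by (simp add: abs_le_iff)
  qed
  then have "gamma2_approx (C \<times> C) UNIV diff_matrix \<alpha> \<le> gamma2 (C \<times> C) UNIV D'"
    using fin by (simp add: gamma2_approx_le)
  also have "\<dots> \<le> \<bar>1 / 2\<bar> * gamma2 (C \<times> C) UNIV (\<lambda>p. W' (fst p))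
      + \<bar>- 1 / 2\<bar> * gamma2 (C \<times> C) UNIV (\<lambda>p. W' (snd p))"
  proof -
    have "gamma2 (C \<times> C) UNIV D' \<le> gamma2 (C \<times> C) UNIV (\<lambda>p x. (1 / 2) * W' (fst p) x)
        + gamma2 (C \<times> C) UNIV (\<lambda>p x. (- 1 / 2) * W' (snd p) x)"
      unfolding D'_def using fin by (intro gamma2_add_le) auto
    also have "\<dots> \<le> \<bar>1 / 2\<bar> * gamma2 (C \<times> C) UNIV (\<lambda>p. W' (fst p))
        + \<bar>- 1 / 2\<bar> * gamma2 (C \<times> C) UNIV (\<lambda>p. W' (snd p))"
      using fin by (intro add_mono gamma2_scale_le) auto
    finally show ?thesis .
  qed
  also have "\<dots> \<le> \<bar>1 / 2\<bar> * gamma2 C UNIV W' + \<bar>- 1 / 2\<bar> * gamma2 C UNIV W'"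
    using fin by (intro add_mono mult_left_mono gamma2_reindex_rows_le) auto
  finally show "gamma2_approx (C \<times> C) UNIV diff_matrix \<alpha> \<le> gamma2 C UNIV W'"
    by simp
qed

lemma gamma2_approx_concept_le_diff_half:
  fixes C :: "('x::finite \<Rightarrow> real) set"
  assumes fin: "finite C" and "0 \<le> \<alpha>" and bounded: "\<forall>c\<in>C. \<forall>x. \<bar>c x\<bar> \<le> 1"
  shows "gamma2_approx C UNIV concept_matrix \<alpha> \<le> 2 * gamma2_approx (C \<times> C) UNIV diff_matrix (\<alpha> / 2) + 1"
proof -
  \<comment> \<open>for empty \<open>C\<close> any bounded \<open>c\<^sub>0\<close> serves\<close>
  obtain c\<^sub>0 :: "'x \<Rightarrow> real" where c\<^sub>0: "\<forall>x. \<bar>c\<^sub>0 x\<bar> \<le> 1" "(\<lambda>c. (c, c\<^sub>0)) ` C \<subseteq> C \<times> C"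
  proof (cases "C = {}")
    case True
    then show ?thesis using that[of "\<lambda>_. 0"] by simp
  next
    case False
    then obtain c where c: "c \<in> C" by blast
    show ?thesis
    proof (rule that)
      show "\<forall>x. \<bar>c x\<bar> \<le> 1" using bounded c by simp
      show "(\<lambda>c'. (c', c)) ` C \<subseteq> C \<times> C" using c by blast
    qed
  qed
  have "(gamma2_approx C UNIV concept_matrix \<alpha> - 1) / 2 \<le> gamma2_approx (C \<times> C) UNIV diff_matrix (\<alpha> / 2)"
  proof (rule gamma2_approx_greatest)
    show "0 \<le> \<alpha> / 2" using \<open>0 \<le> \<alpha>\<close> by simp
  next
    fix D' assume D': "\<forall>p\<in>C \<times> C. \<forall>x\<in>UNIV. \<bar>D' p x - diff_matrix p x\<bar> \<le> \<alpha> / 2"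
    define W' where "W' c x = 2 * D' (c, c\<^sub>0) x + c\<^sub>0 x" for c x
    have "\<forall>c\<in>C. \<forall>x\<in>UNIV. \<bar>W' c x - concept_matrix c x\<bar> \<le> \<alpha>"
    proof (intro ballI)
      fix c x assume "c \<in> C"
      then have "\<bar>D' (c, c\<^sub>0) x - diff_matrix (c, c\<^sub>0) x\<bar> \<le> \<alpha> / 2"
        using D' c\<^sub>0(2) by auto
      moreover have "W' c x - concept_matrix c x = 2 * (D' (c, c\<^sub>0) x - diff_matrix (c, c\<^sub>0) x)"
        by (simp add: W'_def concept_matrix_def diff_matrix_def right_diff_distrib diff_divide_distrib)
      ultimately show "\<bar>W' c x - concept_matrix c x\<bar> \<le> \<alpha>"
        by (simp only: abs_mult) simp
    qed
    then have "gamma2_approx C UNIV concept_matrix \<alpha> \<le> gamma2 C UNIV W'"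
      using fin by (simp add: gamma2_approx_le)
    also have "\<dots> \<le> gamma2 C UNIV (\<lambda>c x. 2 * D' (c, c\<^sub>0) x) + gamma2 C UNIV (\<lambda>c. c\<^sub>0)"
      unfolding W'_def by (rule gamma2_add_le[OF fin finite_UNIV])
    also have "\<dots> \<le> 2 * gamma2 C UNIV (\<lambda>c. D' (c, c\<^sub>0)) + 1"
      using gamma2_scale_le[OF fin finite_UNIV, of 2 "\<lambda>c. D' (c, c\<^sub>0)"]
        gamma2_rank_one_le[OF fin finite_UNIV, of "\<lambda>_. 1" c\<^sub>0] c\<^sub>0(1)
      by simp
    also have "\<dots> \<le> 2 * gamma2 (C \<times> C) UNIV D' + 1"
      using gamma2_reindex_rows_le[OF _ fin finite_UNIV c\<^sub>0(2)] fin by simp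
    finally show "(gamma2_approx C UNIV concept_matrix \<alpha> - 1) / 2 \<le> gamma2 (C \<times> C) UNIV D'"
      by simp
  qed
  then show ?thesis by simp
qed

lemma gamma2_approx_concept_le_diff_if_closed_under_negation:
  fixes C :: "('x::finite \<Rightarrow> real) set"
  assumes fin: "finite C" and "0 \<le> \<alpha>" and neg: "\<forall>c\<in>C. (\<lambda>x. - c x) \<in> C"
  shows "gamma2_approx C UNIV concept_matrix \<alpha> \<le> gamma2_approx (C \<times> C) UNIV diff_matrix \<alpha>"
proof (rule gamma2_approx_greatest[OF \<open>0 \<le> \<alpha>\<close>])
  fix D' assume D': "\<forall>p\<in>C \<times> C. \<forall>x\<in>UNIV. \<bar>D' p x - diff_matrix p x\<bar> \<le> \<alpha>"
  have pair_neg: "(\<lambda>c. (c, \<lambda>x. - c x)) ` C \<subseteq> C \<times> C"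
    using neg by auto
  have "\<forall>c\<in>C. \<forall>x\<in>UNIV. \<bar>D' (c, \<lambda>x. - c x) x - concept_matrix c x\<bar> \<le> \<alpha>"
  proof (intro ballI)
    fix c x assume "c \<in> C"
    then have "\<bar>D' (c, \<lambda>x. - c x) x - diff_matrix (c, \<lambda>x. - c x) x\<bar> \<le> \<alpha>"
      using D' pair_neg by blast
    moreover have "diff_matrix (c, \<lambda>x. - c x) x = concept_matrix c x"
      by (simp add: diff_matrix_def concept_matrix_def)
    ultimately show "\<bar>D' (c, \<lambda>x. - c x) x - concept_matrix c x\<bar> \<le> \<alpha>"
      by simp
  qed
  then have "gamma2_approx C UNIV concept_matrix \<alpha> \<le> gamma2 C UNIV (\<lambda>c. D' (c, \<lambda>x. - c x))"
    using fin by (simp add: gamma2_approx_le)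
  also have "\<dots> \<le> gamma2 (C \<times> C) UNIV D'"
    using gamma2_reindex_rows_le[OF _ fin finite_UNIV pair_neg] fin by simp
  finally show "gamma2_approx C UNIV concept_matrix \<alpha> \<le> gamma2 (C \<times> C) UNIV D'" .
qed

theorem lemma3p3:
  fixes C :: "('x::finite \<Rightarrow> real) set" and \<alpha> :: real
  assumes "\<forall>c\<in>C. \<forall>x. c x = 1 \<or> c x = -1"
    and "\<alpha> \<ge> 0"
  shows "gamma2_approx (C \<times> C) UNIV diff_matrix \<alpha> \<le> gamma2_approx C UNIV concept_matrix \<alpha>
    \<and> gamma2_approx C UNIV concept_matrix \<alpha> \<le> 2 * gamma2_approx (C \<times> C) UNIV diff_matrix (\<alpha> / 2) + 1
    \<and> ((\<forall>c\<in>C. (\<lambda>x. - c x) \<in> C) \<longrightarrow>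
         gamma2_approx C UNIV concept_matrix \<alpha> \<le> gamma2_approx (C \<times> C) UNIV diff_matrix \<alpha>)"
proof -
  have "C \<subseteq> {c. \<forall>x. c x \<in> {1, -1}}"
    using assms(1) by auto
  then have fin: "finite C"
    by (rule finite_subset) (rule finite_funs_into, simp)
  have bounded: "\<forall>c\<in>C. \<forall>x. \<bar>c x\<bar> \<le> 1"
    using assms(1) by (metis abs_minus_cancel abs_one order_refl)
  show ?thesis
    using gamma2_approx_diff_le_concept[OF fin assms(2)]
      gamma2_approx_concept_le_diff_half[OF fin assms(2) bounded]
      gamma2_approx_concept_le_diff_if_closed_under_negation[OF fin assms(2)]
    by (intro conjI impI)
qed

end
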